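(* Let $D$ be an $n\times n$ positive definite density matrix. Assume that $f,g$ are standard functions such that $$g(x)\ge c\,\frac{(x-1)^2}{f(x)}\qquad\text{for all }x>0$$ for some constant $c>0$. Then for all $n\times n$ self-adjoint matrices $A_1,\dots,A_m$, $$\mathrm{Det}\Big(\big[\mathrm{qCov}^g_D(A_i,A_j)\big]_{i,j=1}^m\Big)\ \ge\ \mathrm{Det}\Big(\big[c\,\gamma^f_D([D,A_i],[D,A_j])\big]_{i,j=1}^m\Big).$$ Moreover, equality holds if and only if the matrices $A_i-(\mathrm{Tr}\,DA_i)I$, $1\le i\le m$, are linearly dependent, and in that case both sides are zero.
   Context: A function $f:(0,\infty)\to(0,\infty)$ is called standard if it is operator monotone, $f(1)=1$ and $f(t)=tf(t^{-1})$ for all $t>0$. For a standard $f$ define the mean $M_f(a,b):=bf(a/b)$ for $a,b>0$. For a positive definite density matrix $D$ (i.e. $D>0$, $\mathrm{Tr}\,D=1$), let $\mathbf L_D(X)=DX$, $\mathbf R_D(X)=XD$ on $n\times n$ complex matrices and $\mathbb J^f_D:=f(\mathbf L_D\mathbf R_D^{-1})\mathbf R_D$. The quantum Fisher information is $\gamma^f_D(A,B):=\mathrm{Tr}\,A^*(\mathbb J^f_D)^{-1}(B)$ and the quantum covariance is $\mathrm{qCov}^f_D(A,B):=\mathrm{Tr}\,A^*\mathbb J^f_D(B)-(\mathrm{Tr}\,DA^* )(\mathrm{Tr}\,DB)$. Equivalently, if $D=\mathrm{Diag}(\lambda_1,\dots,\lambda_n)$ with $\lambda_i>0$, then $\gamma^f_D(A,B)=\sum_{i,j}\frac{1}{M_f(\lambda_i,\lambda_j)}\overline{A_{ij}}B_{ij}$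 and $\mathrm{qCov}^f_D(A,B)=\sum_{i,j}M_f(\lambda_i,\lambda_j)\overline{A_{ij}}B_{ij}-\big(\sum_i\lambda_i\overline{A_{ii}}\big)\big(\sum_i\lambda_iB_{ii}\big)$. $[D,A]=DA-AD$, and $I$ is the identity matrix. *)

theory Defs
  imports "Jordan_Normal_Form.Matrix" "Jordan_Normal_Form.Determinant"
begin

definition mtrace :: "complex mat \<Rightarrow> complex" where
  "mtrace A = (\<Sum>i<dim_row A. A $$ (i,i))"

definition adj :: "complex mat \<Rightarrow> complex mat" where
  "adj A = mat (dim_col A) (dim_row A) (\<lambda>(i,j). cnj (A $$ (j,i)))"

definition hermitian :: "nat \<Rightarrow> complex mat \<Rightarrow> bool" where
  "hermitian n A \<longleftrightarrow> A \<in> carrier_mat n n \<and> adj A = A"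

definition unitary :: "nat \<Rightarrow> complex mat \<Rightarrow> bool" where
  "unitary n U \<longleftrightarrow> U \<in> carrier_mat n n \<and> adj U * U = 1\<^sub>m n"

definition qform :: "complex mat \<Rightarrow> complex vec \<Rightarrow> complex" where
  "qform A v = (\<Sum>i<dim_vec v. cnj (v $ i) * (A *\<^sub>v v) $ i)"

definition pos_semidef :: "nat \<Rightarrow> complex mat \<Rightarrow> bool" where
  "pos_semidef n A \<longleftrightarrow> hermitian n A \<and>
     (\<forall>v \<in> carrier_vec n. 0 \<le> Re (qform A v))"

definition pos_def :: "nat \<Rightarrow> complex mat \<Rightarrow> bool" where
  "pos_def n A \<longleftrightarrow> hermitian n A \<and>
     (\<forall>v \<in> carrier_vec n. v \<noteq> 0\<^sub>v n \<longrightarrow> 0 < Re (qform A v))"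

definition loewner_le :: "nat \<Rightarrow> complex mat \<Rightarrow> complex mat \<Rightarrow> bool" where
  "loewner_le n A B \<longleftrightarrow> hermitian n A \<and> hermitian n B \<and> pos_semidef n (B - A)"

definition diag_c :: "nat \<Rightarrow> (nat \<Rightarrow> real) \<Rightarrow> complex mat" where
  "diag_c n l = mat n n (\<lambda>(i,j). if i = j then complex_of_real (l i) else 0)"

definition spec_decomp :: "complex mat \<Rightarrow> complex mat \<times> (nat \<Rightarrow> real)" where
  "spec_decomp A = (SOME (U, l). unitary (dim_row A) U \<and>
       A = U * diag_c (dim_row A) l * adj U)"

definition mat_fun :: "(real \<Rightarrow> real) \<Rightarrow> complex mat \<Rightarrow> complex mat" where
  "mat_fun f A = (case spec_decomp A of (U, l) \<Rightarrow>
       U * diag_c (dim_row A) (\<lambda>i. f (l i)) * adj U)"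

definition operator_monotone :: "(real \<Rightarrow> real) \<Rightarrow> bool" where
  "operator_monotone f \<longleftrightarrow>
     (\<forall>n A B. pos_def n A \<and> pos_def n B \<and> loewner_le n A B \<longrightarrow>
        loewner_le n (mat_fun f A) (mat_fun f B))"

definition standard :: "(real \<Rightarrow> real) \<Rightarrow> bool" where
  "standard f \<longleftrightarrow> (\<forall>t>0. f t > 0) \<and> operator_monotone f \<and> f 1 = 1 \<and>
     (\<forall>t>0. f t = t * f (1 / t))"

definition mean :: "(real \<Rightarrow> real) \<Rightarrow> real \<Rightarrow> real \<Rightarrow> real" where
  "mean f a b = b * f (a / b)"

definition density :: "nat \<Rightarrow> complex mat \<Rightarrow> bool" where
  "density n D \<longleftrightarrow> pos_def n D \<and> mtrace D = 1"

text \<open>Superoperator phi(L_D R_D^{-1}) R_D-type map: in the eigenbasis of D it is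
  the Schur multiplier with kernel k(l_i,l_j). J^f_D uses k = M_f, its inverse
  uses k = 1/M_f.\<close>
definition schur_op :: "(real \<Rightarrow> real \<Rightarrow> real) \<Rightarrow> complex mat \<Rightarrow> complex mat \<Rightarrow> complex mat" where
  "schur_op k D B = (case spec_decomp D of (U, l) \<Rightarrow>
     U * mat (dim_row D) (dim_row D)
          (\<lambda>(i,j). complex_of_real (k (l i) (l j)) * (adj U * B * U) $$ (i,j)) * adj U)"

definition J_op :: "(real \<Rightarrow> real) \<Rightarrow> complex mat \<Rightarrow> complex mat \<Rightarrow> complex mat" where
  "J_op f D = schur_op (mean f) D"

definition J_inv :: "(real \<Rightarrow> real) \<Rightarrow> complex mat \<Rightarrow> complex mat \<Rightarrow> complex mat" where
  "J_inv f D = schur_op (\<lambda>a b. 1 / mean f a b) D"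

definition qFisher :: "(real \<Rightarrow> real) \<Rightarrow> complex mat \<Rightarrow> complex mat \<Rightarrow> complex mat \<Rightarrow> complex" where
  "qFisher f D A B = mtrace (adj A * J_inv f D B)"

definition qCov :: "(real \<Rightarrow> real) \<Rightarrow> complex mat \<Rightarrow> complex mat \<Rightarrow> complex mat \<Rightarrow> complex" where
  "qCov f D A B = mtrace (adj A * J_op f D B) - mtrace (D * adj A) * mtrace (D * B)"

definition commutator :: "complex mat \<Rightarrow> complex mat \<Rightarrow> complex mat" where
  "commutator X Y = X * Y - Y * X"

end

theory Submission
  imports Defs "Jordan_Normal_Form.Schur_Decomposition"
begin

text \<open>Diagonalise \<open>D = U diag(\<lambda>) U\<^sup>*\<close> and let \<open>X\<^sub>i = U\<^sup>* (A\<^sub>i - (Tr D A\<^sub>i) I) U\<close>. Because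
  \<open>M\<^sub>g(\<lambda>,\<lambda>) = \<lambda>\<close> and \<open>\<Sum>\<lambda>\<^sub>r = 1\<close>, the correction term of the covariance is absorbed by the
  centering, and centering does not change \<open>[D, A\<^sub>i]\<close>. Hence both matrices are Gram matrices of
  the \<open>X\<^sub>i\<close>, viewed as vectors indexed by pairs \<open>(r,s)\<close>, with weights \<open>M\<^sub>g(\<lambda>\<^sub>r,\<lambda>\<^sub>s)\<close> and
  \<open>c (\<lambda>\<^sub>r - \<lambda>\<^sub>s)\<^sup>2 / M\<^sub>f(\<lambda>\<^sub>r,\<lambda>\<^sub>s)\<close>.

  Monotonicity and the symmetry \<open>f(x) = x f(1/x)\<close> make the hypothesis strict away from 1, so the
  second weight is strictly below the first everywhere (on the diagonal it vanishes while the first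
  is \<open>\<lambda>\<^sub>r > 0\<close>). If the \<open>X\<^sub>i\<close> are independent, the two quadratic forms satisfy
  \<open>0 \<le> q\<^sub>2 < q\<^sub>1\<close> on nonzero vectors and simultaneous diagonalisation gives \<open>det G\<^sub>2 < det G\<^sub>1\<close>;
  if they are dependent, both Gram matrices are singular.\<close>

section \<open>Matrix algebra\<close>

lemma scalar_prod_lessThan: "v \<bullet> w = (\<Sum>i<dim_vec w. v $ i * w $ i)"
  by (simp add: scalar_prod_def lessThan_atLeast0)

lemma index_mult_mat_sum:
  assumes "i < dim_row A" "j < dim_col B" "dim_col A = dim_row B"
  shows "(A * B) $$ (i,j) = (\<Sum>k<dim_col A. A $$ (i,k) * B $$ (k,j))"
  using assms by (simp add: scalar_prod_lessThan)

lemma adj_dim[simp]: "dim_row (adj A) = dim_col A" "dim_col (adj A) = dim_row A"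
  by (auto simp: adj_def)

lemma adj_carrier_mat[simp]: "A \<in> carrier_mat n m \<Longrightarrow> adj A \<in> carrier_mat m n"
  unfolding carrier_mat_def by simp

lemma index_adj[simp]: "i < dim_col A \<Longrightarrow> j < dim_row A \<Longrightarrow> adj A $$ (i,j) = cnj (A $$ (j,i))"
  by (auto simp: adj_def)

lemma adj_adj[simp]: "adj (adj A) = A"
  by (rule eq_matI) auto

lemma adj_one[simp]: "adj (1\<^sub>m n) = 1\<^sub>m n"
  by (rule eq_matI) auto

lemma adj_mult:
  assumes "A \<in> carrier_mat n k" "B \<in> carrier_mat k m"
  shows "adj (A * B) = adj B * adj A"
  by (rule eq_matI) (use assms in \<open>auto simp: scalar_prod_lessThan mult.commute\<close>)

lemma adj_conj_mat:
  assumes "T \<in> carrier_mat n n" "X \<in> carrier_mat n n"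
  shows "adj (adj T * X * T) = adj T * adj X * T"
  using assms by (simp add: adj_mult[of _ n n _ n] assoc_mult_mat[of _ n n _ n _ n] mult_carrier_mat[of _ n n _ n])

lemma mtrace_mult_comm:
  assumes "A \<in> carrier_mat n m" "B \<in> carrier_mat m n"
  shows "mtrace (A * B) = mtrace (B * A)"
  using assms unfolding mtrace_def
  by (simp add: scalar_prod_lessThan, subst sum.swap, simp add: mult.commute)

lemma unitary_carrier: "unitary n U \<Longrightarrow> U \<in> carrier_mat n n"
  by (simp add: unitary_def)

lemma unitary_adj_mult: "unitary n U \<Longrightarrow> adj U * U = 1\<^sub>m n"
  by (simp add: unitary_def)

lemma unitary_mult_adj: "unitary n U \<Longrightarrow> U * adj U = 1\<^sub>m n"
  using mat_mult_left_right_inverse[of "adj U" n U] unfolding unitary_def by auto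

lemma unitary_mult:
  assumes "unitary n U" "unitary n V"
  shows "unitary n (U * V)"
proof -
  have U: "U \<in> carrier_mat n n" and V: "V \<in> carrier_mat n n"
    using assms by (auto simp: unitary_carrier)
  have "adj (U * V) * (U * V) = adj V * (adj U * U) * V"
    using U V by (simp add: adj_mult[OF U V] assoc_mult_mat[of _ n n _ n _ n] mult_carrier_mat[of _ n n _ n])
  then show ?thesis
    using U V unitary_adj_mult[OF assms(1)] unitary_adj_mult[OF assms(2)] by (simp add: unitary_def)
qed

lemma unitary_adj_mult_cancel:
  assumes "unitary n U" "X \<in> carrier_mat n n"
  shows "adj U * (U * X) = X"
  using assms unitary_carrier[OF assms(1)] unitary_adj_mult[OF assms(1)]
  by (simp flip: assoc_mult_mat[of _ n n _ n _ n])

lemma unitary_conj_cancel: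
  assumes "unitary n U" "X \<in> carrier_mat n n"
  shows "adj U * (U * X * adj U) * U = X" "U * (adj U * X * U) * adj U = X"
proof -
  have U: "U \<in> carrier_mat n n" using assms(1) by (rule unitary_carrier)
  have "adj U * (U * X * adj U) * U = (adj U * U) * X * (adj U * U)"
    using U assms(2) by (simp add: assoc_mult_mat[of _ n n _ n _ n] mult_carrier_mat[of _ n n _ n])
  then show "adj U * (U * X * adj U) * U = X"
    using assms by (simp add: unitary_adj_mult)
  have "U * (adj U * X * U) * adj U = (U * adj U) * X * (U * adj U)"
    using U assms(2) by (simp add: assoc_mult_mat[of _ n n _ n _ n] mult_carrier_mat[of _ n n _ n])
  then show "U * (adj U * X * U) * adj U = X"
    using assms by (simp add: unitary_mult_adj)
qed

lemma diag_c_carrier[simp]: "diag_c n l \<in> carrier_mat n n"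
  by (auto simp: diag_c_def)

lemma diag_c_dim[simp]: "dim_row (diag_c n l) = n" "dim_col (diag_c n l) = n"
  by (auto simp: diag_c_def)

lemma index_diag_c[simp]:
  "i < n \<Longrightarrow> j < n \<Longrightarrow> diag_c n l $$ (i,j) = (if i = j then complex_of_real (l i) else 0)"
  by (auto simp: diag_c_def)

lemma adj_diag_c[simp]: "adj (diag_c n l) = diag_c n l"
  by (rule eq_matI) auto

lemma diag_c_mult: "diag_c n a * diag_c n b = diag_c n (\<lambda>i. a i * b i)"
  by (rule eq_matI) (auto simp: scalar_prod_lessThan if_distrib cong: if_cong)

lemma diag_c_one: "diag_c n (\<lambda>_. 1) = 1\<^sub>m n"
  by (rule eq_matI) auto

lemma index_diag_c_mult:
  assumes "M \<in> carrier_mat n n" "p < n" "q < n"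
  shows "(diag_c n l * M) $$ (p,q) = complex_of_real (l p) * M $$ (p,q)"
    and "(M * diag_c n l) $$ (p,q) = M $$ (p,q) * complex_of_real (l q)"
  using assms
  by (simp_all add: index_mult_mat_sum if_distrib[of "\<lambda>x. x * _"] if_distrib[of "\<lambda>x. _ * x"]
      del: index_mult_mat(1) cong: if_cong)

lemma index_mult_diag_c_adj:
  assumes "X \<in> carrier_mat n n" "i < n" "j < n"
  shows "(X * diag_c n l * adj X) $$ (i,j) =
    (\<Sum>k<n. X $$ (i,k) * complex_of_real (l k) * cnj (X $$ (j,k)))"
  using assms by (simp add: scalar_prod_lessThan sum_distrib_right if_distrib cong: if_cong)

lemma det_diag_c: "det (diag_c n l) = complex_of_real (\<Prod>i<n. l i)"
proof -
  have "det (diag_c n l) = prod_list (diag_mat (diag_c n l))"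
    by (rule det_upper_triangular) (auto simp: upper_triangular_def)
  also have "diag_mat (diag_c n l) = map (\<lambda>i. complex_of_real (l i)) [0..<n]"
    by (auto simp: diag_mat_def intro: nth_equalityI)
  finally show ?thesis
    by (simp add: prod.distinct_set_conv_list[symmetric] lessThan_atLeast0)
qed

lemma det_unitary_diag:
  assumes "unitary n U"
  shows "det (U * diag_c n l * adj U) = complex_of_real (\<Prod>i<n. l i)"
proof -
  have U: "U \<in> carrier_mat n n" using assms by (rule unitary_carrier)
  have "det (U * diag_c n l * adj U) = det (diag_c n l) * (det (adj U) * det U)"
    using U by (simp add: det_mult[of _ n] mult_ac)
  also have "det (adj U) * det U = 1"
    using det_mult[of "adj U" n U] U unitary_adj_mult[OF assms] by simp
  finally show ?thesis by (simp add: det_diag_c)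
qed

lemma hermitian_carrier: "hermitian n A \<Longrightarrow> A \<in> carrier_mat n n"
  by (simp add: hermitian_def)

lemma hermitian_index: "hermitian n A \<Longrightarrow> i < n \<Longrightarrow> j < n \<Longrightarrow> A $$ (i,j) = cnj (A $$ (j,i))"
  by (metis hermitian_def carrier_matD index_adj)

lemma hermitian_conj:
  assumes "hermitian n G" "T \<in> carrier_mat n n"
  shows "hermitian n (adj T * G * T)"
  using assms adj_conj_mat[of T n G] by (auto simp: hermitian_def)

lemma index_conj_mat:
  assumes "W \<in> carrier_mat n n" "A \<in> carrier_mat n n" "i < n" "j < n"
  shows "(adj W * A * W) $$ (i,j) = (\<Sum>p<n. cnj (W $$ (p,i)) * (\<Sum>q<n. A $$ (p,q) * W $$ (q,j)))"
proof -
  have "(adj W * A * W) $$ (i,j) = (\<Sum>q<n. (\<Sum>p<n. cnj (W$$(p,i)) * A$$(p,q)) * W$$(q,j))"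
    using assms by (simp add: scalar_prod_lessThan)
  also have "\<dots> = (\<Sum>p<n. cnj (W $$ (p,i)) * (\<Sum>q<n. A $$ (p,q) * W $$ (q,j)))"
    by (simp add: sum_distrib_left sum_distrib_right mult.assoc) (rule sum.swap)
  finally show ?thesis .
qed

section \<open>Spectral theorem for hermitian matrices\<close>

lemma unit_eigenvector_exists:
  fixes A :: "complex mat"
  assumes A: "A \<in> carrier_mat n n" and n: "n > 0"
  obtains e v where "v \<in> carrier_vec n" "v \<bullet>c v = 1" "A *\<^sub>v v = e \<cdot>\<^sub>v v"
proof -
  obtain es where cp: "char_poly A = (\<Prod>a\<leftarrow>es. [:- a, 1:])" and "length es = n"
    using char_poly_factorized[OF A] by auto
  then obtain e es' where es: "es = e # es'" using n by (cases es) auto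
  have "eigenvalue A e"
    using eigenvalue_root_char_poly[OF A] unfolding cp es by simp
  then have "eigenvector A (find_eigenvector A e) e"
    by (rule find_eigenvector[OF A])
  then obtain v0 where v0: "v0 \<in> carrier_vec n" "v0 \<noteq> 0\<^sub>v n" "A *\<^sub>v v0 = e \<cdot>\<^sub>v v0"
    using A unfolding eigenvector_def by auto
  have "0 < v0 \<bullet>c v0" using conjugate_square_greater_0_vec[OF v0(1)] v0(2) by auto
  then obtain r where r: "r > 0" "v0 \<bullet>c v0 = complex_of_real r"
    by (auto simp: less_complex_def complex_eq_iff intro!: exI[of _ "Re (v0 \<bullet>c v0)"])
  define v where "v = complex_of_real (1 / sqrt r) \<cdot>\<^sub>v v0"
  have "v \<bullet>c v = complex_of_real (1 / sqrt r) * cnj (complex_of_real (1 / sqrt r)) * (v0 \<bullet>c v0)"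
    unfolding v_def using v0(1)
    by (simp add: scalar_prod_lessThan sum_distrib_left mult_ac)
  also have "\<dots> = 1" using r by (simp flip: of_real_mult)
  finally have "v \<bullet>c v = 1" .
  moreover have "A *\<^sub>v v = e \<cdot>\<^sub>v v"
    unfolding v_def using v0 A by (simp add: mult_mat_vec smult_smult_assoc mult.commute)
  moreover have "v \<in> carrier_vec n" using v0 unfolding v_def by simp
  ultimately show thesis using that by blast
qed

lemma unitary_with_first_column:
  assumes v: "v \<in> carrier_vec n" and vv: "v \<bullet>c v = 1"
  obtains W where "unitary n W" "\<And>q. q < n \<Longrightarrow> W $$ (q,0) = v $ q"
proof -
  interpret cof_vec_space n "TYPE(complex)" .
  have vnz: "v \<noteq> 0\<^sub>v n" using vv v by auto
  have "n \<noteq> 0" using vv v by (auto simp: scalar_prod_lessThan intro!: Nat.gr0I)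
  define b where "b = basis_completion v"
  note bc = basis_completion[OF v vnz, folded b_def]
  define ws where "ws = gram_schmidt n b"
  note gs = gram_schmidt_result[OF bc(2) bc(4) bc(5) ws_def]
  from bc(6,7) \<open>n \<noteq> 0\<close> obtain vs where bv: "b = v # vs" by (cases b) auto
  have lws: "length ws = n" using gs bc by simp
  have "hd ws = v" unfolding ws_def bv using v by simp
  then have ws0: "ws ! 0 = v"
    using lws \<open>n \<noteq> 0\<close> by (cases ws) auto
  have wsc: "ws ! i \<in> carrier_vec n" if "i < n" for i using gs lws that by auto
  have ws_orth: "ws ! j \<bullet>c ws ! i = 0 \<longleftrightarrow> i \<noteq> j" if "i < n" "j < n" for i j
    using gs(2) that lws by (auto simp: corthogonal_def)
  have pos: "0 < ws ! i \<bullet>c ws ! i" if "i < n" for i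
    using conjugate_square_greater_0_vec[OF wsc[OF that]] ws_orth[OF that that] by auto
  define nr where "nr = (\<lambda>i. 1 / sqrt (Re (ws ! i \<bullet>c ws ! i)))"
  define W where "W = mat n n (\<lambda>(p,i). complex_of_real (nr i) * (ws ! i) $ p)"
  have W: "W \<in> carrier_mat n n" unfolding W_def by auto
  have "(adj W * W) $$ (i,j) = (if i = j then 1 else 0)" if ij: "i < n" "j < n" for i j
  proof -
    have "(adj W * W) $$ (i,j) = complex_of_real (nr i * nr j) * (ws ! j \<bullet>c ws ! i)"
      using ij wsc[OF ij(1)] wsc[OF ij(2)]
      by (simp add: W_def scalar_prod_lessThan sum_distrib_left mult_ac)
    also have "\<dots> = (if i = j then 1 else 0)"
    proof (cases "i = j")
      case True
      with pos[OF ij(1)] show ?thesis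
        by (auto simp: nr_def less_complex_def complex_eq_iff power_divide)
    qed (use ws_orth ij in auto)
    finally show ?thesis .
  qed
  then have "unitary n W"
    unfolding unitary_def using W by (auto intro!: eq_matI)
  moreover have "W $$ (q,0) = v $ q" if "q < n" for q
    using that ws0 vv unfolding W_def nr_def by simp
  ultimately show thesis by (rule that)
qed

lemma adj_zero[simp]: "adj (0\<^sub>m n m) = 0\<^sub>m m n"
  by (rule eq_matI) auto

lemma adj_four_block_mat:
  assumes "A \<in> carrier_mat n1 m1" "B \<in> carrier_mat n1 m2" "C \<in> carrier_mat n2 m1" "D \<in> carrier_mat n2 m2"
  shows "adj (four_block_mat A B C D) = four_block_mat (adj A) (adj C) (adj B) (adj D)"
  by (rule eq_matI) (use assms in auto)

lemma diag_c_four_block: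
  "diag_c (n1 + n2) l = four_block_mat (diag_c n1 l) (0\<^sub>m n1 n2) (0\<^sub>m n2 n1) (diag_c n2 (\<lambda>i. l (n1 + i)))"
  by (rule eq_matI) auto

lemma unitary_four_block:
  assumes U1: "unitary n1 U1" and U2: "unitary n2 U2"
  shows "unitary (n1 + n2) (four_block_mat U1 (0\<^sub>m n1 n2) (0\<^sub>m n2 n1) U2)"
proof -
  have c: "U1 \<in> carrier_mat n1 n1" "U2 \<in> carrier_mat n2 n2"
    using U1 U2 by (auto simp: unitary_carrier)
  show ?thesis
    unfolding unitary_def using c
    by (simp add: adj_four_block_mat[OF c(1) _ _ c(2)] mult_four_block_mat[of _ n1 n1 _ n2 _ n2 _ _ n1 _ n2]
        unitary_adj_mult[OF U1] unitary_adj_mult[OF U2])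
qed

lemma four_block_unitary_diag:
  assumes U1: "U1 \<in> carrier_mat n1 n1" and U2: "U2 \<in> carrier_mat n2 n2"
  shows "four_block_mat (U1 * diag_c n1 l * adj U1) (0\<^sub>m n1 n2) (0\<^sub>m n2 n1)
           (U2 * diag_c n2 (\<lambda>i. l (n1 + i)) * adj U2)
       = four_block_mat U1 (0\<^sub>m n1 n2) (0\<^sub>m n2 n1) U2 * diag_c (n1 + n2) l *
           adj (four_block_mat U1 (0\<^sub>m n1 n2) (0\<^sub>m n2 n1) U2)"
  using assms
  by (simp add: diag_c_four_block[of n1 n2] adj_four_block_mat[OF U1 _ _ U2]
      mult_four_block_mat[of _ n1 n1 _ n2 _ n2 _ _ n1 _ n2]
      mult_carrier_mat[of _ n1 n1 _ n1] mult_carrier_mat[of _ n2 n2 _ n2])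

lemma unitary_conj_eigenvector_column:
  assumes W: "unitary n W" and A: "A \<in> carrier_mat n n"
    and v: "v \<in> carrier_vec n" and Av: "A *\<^sub>v v = e \<cdot>\<^sub>v v"
    and Wv: "\<And>q. q < n \<Longrightarrow> W $$ (q,0) = v $ q" and i: "i < n"
  shows "(adj W * A * W) $$ (i,0) = (if i = 0 then e else 0)"
proof -
  have Wc: "W \<in> carrier_mat n n" using W by (rule unitary_carrier)
  have Wcol: "(\<Sum>q<n. A $$ (p,q) * W $$ (q,0)) = e * W $$ (p,0)" if "p < n" for p
    using arg_cong[OF Av, of "\<lambda>x. x $ p"] that A v Wv by (simp add: scalar_prod_lessThan)
  have "(adj W * A * W) $$ (i,0) = (\<Sum>p<n. cnj (W $$ (p,i)) * (\<Sum>q<n. A $$ (p,q) * W $$ (q,0)))"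
    using i by (intro index_conj_mat[OF Wc A]) auto
  also have "\<dots> = e * (\<Sum>p<n. cnj (W $$ (p,i)) * W $$ (p,0))"
    by (simp add: Wcol sum_distrib_left mult_ac)
  also have "(\<Sum>p<n. cnj (W $$ (p,i)) * W $$ (p,0)) = (adj W * W) $$ (i,0)"
    using Wc i by (simp add: scalar_prod_lessThan)
  finally show ?thesis using unitary_adj_mult[OF W] i by simp
qed

lemma hermitian_unitary_diagonalizable:
  assumes "hermitian n A"
  shows "\<exists>U l. unitary n U \<and> A = U * diag_c n l * adj U"
  using assms
proof (induction n arbitrary: A)
  case 0
  then show ?case
    by (intro exI[of _ "1\<^sub>m 0"]) (auto simp: unitary_def hermitian_def intro!: eq_matI)
next
  case (Suc k)
  have A: "A \<in> carrier_mat (Suc k) (Suc k)" using Suc.prems by (rule hermitian_carrier)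
  obtain e v where v: "v \<in> carrier_vec (Suc k)" "v \<bullet>c v = 1" and Av: "A *\<^sub>v v = e \<cdot>\<^sub>v v"
    using unit_eigenvector_exists[OF A] by blast
  obtain W where W: "unitary (Suc k) W" and Wv: "\<And>q. q < Suc k \<Longrightarrow> W $$ (q,0) = v $ q"
    using unitary_with_first_column[OF v] by blast
  have Wc: "W \<in> carrier_mat (Suc k) (Suc k)" using W by (rule unitary_carrier)
  define A' where "A' = adj W * A * W"
  have hA': "hermitian (Suc k) A'" unfolding A'_def by (rule hermitian_conj[OF Suc.prems Wc])
  have col: "A' $$ (i,0) = (if i = 0 then e else 0)" if "i < Suc k" for i
    unfolding A'_def by (rule unitary_conj_eigenvector_column[OF W A v(1) Av Wv that])
  have row: "A' $$ (0,j) = (if j = 0 then cnj e else 0)" if "j < Suc k" for j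
    using hermitian_index[OF hA' _ that, of 0] col[OF that] by simp
  have e: "cnj e = e" "complex_of_real (Re e) = e"
    using col[of 0] row[of 0] by (simp_all add: complex_eq_iff)
  define A3 where "A3 = mat k k (\<lambda>(i,j). A' $$ (Suc i, Suc j))"
  have "hermitian k A3"
    unfolding hermitian_def
  proof
    show "adj A3 = A3"
    proof (rule eq_matI)
      fix i j assume "i < dim_row A3" "j < dim_col A3"
      then show "adj A3 $$ (i,j) = A3 $$ (i,j)"
        using hermitian_index[OF hA', of "Suc j" "Suc i"] by (simp add: A3_def)
    qed (simp_all add: A3_def)
  qed (simp add: A3_def)
  then obtain U3 l3 where U3: "unitary k U3" and A3: "A3 = U3 * diag_c k l3 * adj U3"
    using Suc.IH by blast
  define l where "l = (\<lambda>i. if i = 0 then Re e else l3 (i - 1))"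
  define B where "B = four_block_mat (1\<^sub>m 1) (0\<^sub>m 1 k) (0\<^sub>m k 1) U3"
  have B: "unitary (Suc k) B"
    unfolding B_def using unitary_four_block[OF _ U3, of 1 "1\<^sub>m 1"] by (simp add: unitary_def)
  have "A' = four_block_mat (diag_c 1 l) (0\<^sub>m 1 k) (0\<^sub>m k 1) A3"
    using col row e hermitian_carrier[OF hA'] by (intro eq_matI) (auto simp: A3_def l_def)
  also have "\<dots> = B * diag_c (Suc k) l * adj B"
    using four_block_unitary_diag[OF one_carrier_mat[of 1] unitary_carrier[OF U3], of l]
    unfolding B_def A3 by (simp add: l_def)
  finally have "A = (W * B) * diag_c (Suc k) l * adj (W * B)"
    using unitary_conj_cancel(2)[OF W A] Wc unitary_carrier[OF B]
    by (simp add: A'_def adj_mult[of _ "Suc k" "Suc k"] assoc_mult_mat[of _ "Suc k" "Suc k" _ "Suc k" _ "Suc k"]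
        mult_carrier_mat[of _ "Suc k" "Suc k" _ "Suc k"])
  then show ?case using unitary_mult[OF W B] by blast
qed

lemma spec_decompD:
  assumes "hermitian n A" "spec_decomp A = (U,l)"
  shows "unitary n U" "A = U * diag_c n l * adj U"
proof -
  have n: "dim_row A = n" using hermitian_carrier[OF assms(1)] by simp
  have "\<exists>p. case p of (U,l) \<Rightarrow> unitary (dim_row A) U \<and> A = U * diag_c (dim_row A) l * adj U"
    using hermitian_unitary_diagonalizable[OF assms(1)] unfolding n by auto
  from someI_ex[OF this] show "unitary n U" "A = U * diag_c n l * adj U"
    using assms(2) unfolding spec_decomp_def n by auto
qed

section \<open>Quadratic forms and determinants\<close>

lemma qform_conj:
  assumes T: "T \<in> carrier_mat n n" and G: "G \<in> carrier_mat n n" and x: "x \<in> carrier_vec n"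
  shows "qform (adj T * G * T) x = qform G (T *\<^sub>v x)"
proof -
  define y where "y = T *\<^sub>v x"
  define w where "w = G *\<^sub>v y"
  have y: "y \<in> carrier_vec n" and w: "w \<in> carrier_vec n" using T G x unfolding y_def w_def by auto
  have "(adj T * G * T) *\<^sub>v x = adj T *\<^sub>v w"
    unfolding w_def y_def using T G x
    by (simp add: assoc_mult_mat_vec[of _ n n _ n x] assoc_mult_mat_vec[of "adj T" n n G n]
        mult_carrier_mat[of _ n n _ n])
  then have "qform (adj T * G * T) x = (\<Sum>i<n. cnj (x $ i) * (\<Sum>k<n. cnj (T $$ (k,i)) * w $ k))"
    unfolding qform_def using x T w by (simp add: scalar_prod_lessThan)
  also have "\<dots> = (\<Sum>k<n. (\<Sum>i<n. cnj (T $$ (k,i) * x $ i)) * w $ k)"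
    by (simp add: sum_distrib_left sum_distrib_right mult_ac) (rule sum.swap)
  also have "\<dots> = qform G y"
    unfolding qform_def w_def using T x y G by (simp add: y_def scalar_prod_lessThan cnj_sum)
  finally show ?thesis unfolding y_def .
qed

lemma qform_unit_vec:
  assumes "X \<in> carrier_mat n n" "k < n"
  shows "qform X (unit_vec n k) = X $$ (k,k)"
proof -
  have "qform X (unit_vec n k) = (\<Sum>i<n. if i = k then (X *\<^sub>v unit_vec n k) $ i else 0)"
    unfolding qform_def by (rule sum.cong) (auto simp: assms(2))
  then show ?thesis
    using assms by (simp add: scalar_prod_lessThan if_distrib cong: if_cong)
qed

lemma qform_diag_c:
  assumes "v \<in> carrier_vec n"
  shows "qform (diag_c n l) v = complex_of_real (\<Sum>i<n. l i * (cmod (v $ i))\<^sup>2)"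
proof -
  have "(diag_c n l *\<^sub>v v) $ i = complex_of_real (l i) * v $ i" if "i < n" for i
    using assms that by (simp add: scalar_prod_lessThan if_distrib[of "\<lambda>x. x * _"] cong: if_cong)
  then show ?thesis
    using assms unfolding qform_def
    by (simp add: complex_norm_square mult_ac del: of_real_power)
qed

lemma hermitian_diag_c: "hermitian n (diag_c n l)"
  by (simp add: hermitian_def)

lemma left_invertible_mult_vec_nonzero:
  fixes T S :: "'a :: field mat"
  assumes T: "T \<in> carrier_mat n n" and S: "S \<in> carrier_mat n n" and inv: "S * T = 1\<^sub>m n"
    and x: "x \<in> carrier_vec n" "x \<noteq> 0\<^sub>v n"
  shows "T *\<^sub>v x \<noteq> 0\<^sub>v n"
proof
  assume "T *\<^sub>v x = 0\<^sub>v n"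
  then have "(S * T) *\<^sub>v x = 0\<^sub>v n"
    using S T x by (auto simp: assoc_mult_mat_vec[of S n n T n x] intro!: eq_vecI)
  then show False using x one_mult_mat_vec[OF x(1)] by (simp add: inv)
qed

lemma unitary_diag_eigenvalue:
  assumes U: "unitary n U" and k: "k < n"
  shows "complex_of_real (l k) = qform (U * diag_c n l * adj U) (U *\<^sub>v unit_vec n k)"
    and "U *\<^sub>v unit_vec n k \<noteq> 0\<^sub>v n"
proof -
  have Uc: "U \<in> carrier_mat n n" using U by (rule unitary_carrier)
  have "complex_of_real (l k) = qform (adj U * (U * diag_c n l * adj U) * U) (unit_vec n k)"
    using qform_unit_vec[of _ n k] k unitary_conj_cancel(1)[OF U diag_c_carrier] by simp
  also have "\<dots> = qform (U * diag_c n l * adj U) (U *\<^sub>v unit_vec n k)"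
    using Uc k by (intro qform_conj) auto
  finally show "complex_of_real (l k) = qform (U * diag_c n l * adj U) (U *\<^sub>v unit_vec n k)" .
  show "U *\<^sub>v unit_vec n k \<noteq> 0\<^sub>v n"
    using k by (intro left_invertible_mult_vec_nonzero[OF Uc _ unitary_adj_mult[OF U]]) (auto simp: Uc)
qed

lemma positive_qform_eigenvalue_pos:
  assumes U: "unitary n U" and k: "k < n"
    and pos: "\<forall>x\<in>carrier_vec n. x \<noteq> 0\<^sub>v n \<longrightarrow> 0 < Re (qform (U * diag_c n l * adj U) x)"
  shows "0 < l k"
  using pos unitary_diag_eigenvalue[OF U k] unitary_carrier[OF U] k
  by (metis Re_complex_of_real mult_mat_vec_carrier unit_vec_carrier)

lemma det_conj_mat:
  assumes "T \<in> carrier_mat n n" "G \<in> carrier_mat n n"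
  shows "det (adj T * G * T) = det (adj T) * det G * det T"
  using assms by (simp add: det_mult[of _ n] mult_carrier_mat[of _ n n _ n])

lemma positive_hermitian_det_pos:
  assumes G: "hermitian m G" and pos: "\<forall>x\<in>carrier_vec m. x \<noteq> 0\<^sub>v m \<longrightarrow> 0 < Re (qform G x)"
  shows "0 < det G"
proof -
  obtain U l where U: "unitary m U" and G_eq: "G = U * diag_c m l * adj U"
    using hermitian_unitary_diagonalizable[OF G] by blast
  have "0 < (\<Prod>k<m. l k)"
    using positive_qform_eigenvalue_pos[OF U] pos unfolding G_eq by (intro prod_pos) auto
  then show ?thesis unfolding G_eq det_unitary_diag[OF U] by (simp add: less_complex_def del: of_real_prod)
qed

lemma positive_hermitian_congruent_one:
  assumes G: "hermitian m G" and pos: "\<forall>x\<in>carrier_vec m. x \<noteq> 0\<^sub>v m \<longrightarrow> 0 < Re (qform G x)"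
  obtains T where "T \<in> carrier_mat m m" "adj T * G * T = 1\<^sub>m m"
proof -
  obtain U l where U: "unitary m U" and G_eq: "G = U * diag_c m l * adj U"
    using hermitian_unitary_diagonalizable[OF G] by blast
  have Uc: "U \<in> carrier_mat m m" using U by (rule unitary_carrier)
  define s where "s = (\<lambda>k. 1 / sqrt (l k))"
  have "s k * l k * s k = 1" if "k < m" for k
  proof -
    have "0 < l k" using positive_qform_eigenvalue_pos[OF U that] pos unfolding G_eq by blast
    then show ?thesis unfolding s_def by (simp add: field_simps)
  qed
  then have one: "diag_c m (\<lambda>k. s k * l k * s k) = 1\<^sub>m m"
    by (intro eq_matI) auto
  have "adj (U * diag_c m s) * G * (U * diag_c m s) = diag_c m s * (adj U * G * U) * diag_c m s"
    using Uc hermitian_carrier[OF G]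
    by (simp add: adj_mult[OF Uc diag_c_carrier] assoc_mult_mat[of _ m m _ m _ m] mult_carrier_mat[of _ m m _ m])
  also have "adj U * G * U = diag_c m l"
    unfolding G_eq by (rule unitary_conj_cancel(1)[OF U diag_c_carrier])
  finally have "adj (U * diag_c m s) * G * (U * diag_c m s) = diag_c m (\<lambda>k. s k * l k * s k)"
    by (simp add: diag_c_mult)
  then show thesis using that[of "U * diag_c m s"] Uc one by simp
qed

text \<open>A congruence \<open>T\<^sup>* G\<^sub>1 T = I\<close> turns the hypothesis into \<open>0 \<le> T\<^sup>* G\<^sub>2 T < I\<close>, so
  \<open>det G\<^sub>2 / det G\<^sub>1 = det (T\<^sup>* G\<^sub>2 T)\<close> is a product of eigenvalues in \<open>[0,1)\<close>.\<close>

lemma det_less_of_qform_less: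
  assumes G1: "hermitian m G1" and G2: "hermitian m G2" and m: "0 < m"
    and less: "\<forall>x\<in>carrier_vec m. x \<noteq> 0\<^sub>v m \<longrightarrow> 0 \<le> Re (qform G2 x) \<and> Re (qform G2 x) < Re (qform G1 x)"
  shows "det G2 < det G1"
proof -
  have G1c: "G1 \<in> carrier_mat m m" and G2c: "G2 \<in> carrier_mat m m"
    using G1 G2 by (auto simp: hermitian_carrier)
  have pos: "\<forall>x\<in>carrier_vec m. x \<noteq> 0\<^sub>v m \<longrightarrow> 0 < Re (qform G1 x)"
    using less by force
  obtain T where Tc: "T \<in> carrier_mat m m" and T: "adj T * G1 * T = 1\<^sub>m m"
    using positive_hermitian_congruent_one[OF G1 pos] by blast
  define H where "H = adj T * G2 * T"
  obtain V mu where V: "unitary m V" and H_eq: "H = V * diag_c m mu * adj V"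
    using hermitian_unitary_diagonalizable[OF hermitian_conj[OF G2 Tc]] unfolding H_def by blast
  have Vc: "V \<in> carrier_mat m m" using V by (rule unitary_carrier)
  have mu: "0 \<le> mu k \<and> mu k < 1" if k: "k < m" for k
  proof -
    define z where "z = V *\<^sub>v unit_vec m k"
    have z: "z \<in> carrier_vec m" "z \<noteq> 0\<^sub>v m"
      unfolding z_def using unitary_diag_eigenvalue(2)[OF V k] Vc by auto
    have y: "T *\<^sub>v z \<in> carrier_vec m" "T *\<^sub>v z \<noteq> 0\<^sub>v m"
      using left_invertible_mult_vec_nonzero[OF Tc _ T z] Tc G1c z
      by (auto simp: mult_carrier_mat[of _ m m _ m])
    have "complex_of_real (mu k) = qform G2 (T *\<^sub>v z)"
      using unitary_diag_eigenvalue(1)[OF V k, of mu] qform_conj[OF Tc G2c z(1)]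
      unfolding z_def H_eq[symmetric] H_def by simp
    moreover have "complex_of_real 1 = qform G1 (T *\<^sub>v z)"
      using unitary_diag_eigenvalue(1)[OF V k, of "\<lambda>_. 1"] qform_conj[OF Tc G1c z(1)]
      unfolding z_def T by (simp add: diag_c_one unitary_mult_adj[OF V] right_mult_one_mat[OF Vc])
    ultimately show ?thesis using less y by (metis Re_complex_of_real)
  qed
  have "(\<Prod>k<m. mu k) < (\<Prod>k<m. 1)"
    using mu m by (intro prod_mono_strict[of 0]) (auto simp: less_imp_le)
  then have prod_mu: "0 \<le> (\<Prod>k<m. mu k)" "(\<Prod>k<m. mu k) < 1"
    using mu by (auto intro: prod_nonneg)
  have "det (adj T) * det G1 * det T = 1"
    using det_conj_mat[OF Tc G1c] T by simp
  moreover have "det (adj T) * det G2 * det T = complex_of_real (\<Prod>k<m. mu k)"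
    using det_conj_mat[OF Tc G2c] det_unitary_diag[OF V] unfolding H_def[symmetric] H_eq by simp
  ultimately have "det G2 = complex_of_real (\<Prod>k<m. mu k) * det G1"
    by (metis (no_types, lifting) mult.commute mult.left_commute mult_1)
  then show ?thesis
    using prod_mu positive_hermitian_det_pos[OF G1 pos]
    by (auto simp: less_complex_def mult_less_cancel_right1 simp del: of_real_prod)
qed

section \<open>Weighted Gram matrices\<close>

definition weighted_gram :: "nat \<Rightarrow> 'k set \<Rightarrow> ('k \<Rightarrow> real) \<Rightarrow> (nat \<Rightarrow> 'k \<Rightarrow> complex) \<Rightarrow> complex mat" where
  "weighted_gram m K w v = mat m m (\<lambda>(i,j). \<Sum>k\<in>K. complex_of_real (w k) * cnj (v i k) * v j k)"

lemma weighted_gram_carrier: "weighted_gram m K w v \<in> carrier_mat m m"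
  by (simp add: weighted_gram_def)

lemma weighted_gram_hermitian: "hermitian m (weighted_gram m K w v)"
  unfolding hermitian_def
  by (auto simp: weighted_gram_def cnj_sum mult_ac intro!: eq_matI)

lemma qform_weighted_gram:
  assumes x: "x \<in> carrier_vec m"
  shows "qform (weighted_gram m K w v) x =
    complex_of_real (\<Sum>k\<in>K. w k * (cmod (\<Sum>i<m. x $ i * v i k))\<^sup>2)"
proof -
  have "qform (weighted_gram m K w v) x =
      (\<Sum>i<m. \<Sum>j<m. \<Sum>k\<in>K. complex_of_real (w k) * (cnj (x $ i * v i k) * (x $ j * v j k)))"
    unfolding qform_def using x
    by (simp add: weighted_gram_def scalar_prod_lessThan sum_distrib_left sum_distrib_right mult_ac)
  also have "\<dots> = (\<Sum>k\<in>K. \<Sum>i<m. \<Sum>j<m. complex_of_real (w k) * (cnj (x $ i * v i k) * (x $ j * v j k)))"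
    by (subst sum.swap, rule sum.cong[OF refl], rule sum.swap)
  also have "\<dots> = (\<Sum>k\<in>K. complex_of_real (w k) * (cnj (\<Sum>i<m. x $ i * v i k) * (\<Sum>j<m. x $ j * v j k)))"
    by (simp add: sum_distrib_left sum_distrib_right cnj_sum) (rule sum.cong[OF refl], rule sum.swap)
  also have "\<dots> = (\<Sum>k\<in>K. complex_of_real (w k * (cmod (\<Sum>i<m. x $ i * v i k))\<^sup>2))"
    by (rule sum.cong[OF refl]) (simp add: complex_norm_square mult.commute del: of_real_power)
  finally show ?thesis by simp
qed

lemma det_weighted_gram_dependent:
  assumes a: "\<exists>i<m. a i \<noteq> 0" "\<forall>k\<in>K. (\<Sum>i<m. a i * v i k) = 0"
  shows "det (weighted_gram m K w v) = 0"
proof -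
  have "weighted_gram m K w v *\<^sub>v vec m a = 0\<^sub>v m"
  proof (rule eq_vecI)
    fix i assume "i < dim_vec (0\<^sub>v m :: complex vec)"
    then have i: "i < m" by simp
    have "(weighted_gram m K w v *\<^sub>v vec m a) $ i =
        (\<Sum>j<m. (\<Sum>k\<in>K. complex_of_real (w k) * cnj (v i k) * v j k) * a j)"
      using i by (simp add: weighted_gram_def scalar_prod_lessThan)
    also have "\<dots> = (\<Sum>k\<in>K. complex_of_real (w k) * cnj (v i k) * (\<Sum>j<m. a j * v j k))"
      by (simp add: sum_distrib_left sum_distrib_right mult_ac) (rule sum.swap)
    finally show "(weighted_gram m K w v *\<^sub>v vec m a) $ i = 0\<^sub>v m $ i"
      using a(2) i by simp
  qed (simp add: weighted_gram_def)
  moreover have "vec m a \<noteq> 0\<^sub>v m"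
  proof
    assume "vec m a = 0\<^sub>v m"
    then have "\<forall>i<m. a i = 0" by (metis index_vec index_zero_vec(1))
    then show False using a(1) by blast
  qed
  ultimately show ?thesis
    using det_0_iff_vec_prod_zero[OF weighted_gram_carrier] vec_carrier[of m a] by blast
qed

lemma det_weighted_gram_less:
  assumes K: "finite K" and w: "\<forall>k\<in>K. 0 \<le> w2 k \<and> w2 k < w1 k" and m: "0 < m"
    and indep: "\<nexists>a. (\<exists>i<m. a i \<noteq> 0) \<and> (\<forall>k\<in>K. (\<Sum>i<m. a i * v i k) = 0)"
  shows "det (weighted_gram m K w2 v) < det (weighted_gram m K w1 v)"
proof (rule det_less_of_qform_less[OF weighted_gram_hermitian weighted_gram_hermitian m], intro ballI impI)
  fix x :: "complex vec" assume x: "x \<in> carrier_vec m" "x \<noteq> 0\<^sub>v m"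
  define u where "u k = (cmod (\<Sum>i<m. x $ i * v i k))\<^sup>2" for k
  have "\<exists>i<m. x $ i \<noteq> 0"
  proof (rule ccontr)
    assume "\<not> (\<exists>i<m. x $ i \<noteq> 0)"
    then have "x = 0\<^sub>v m" using x(1) by (intro eq_vecI) auto
    then show False using x(2) by simp
  qed
  then obtain k where k: "k \<in> K" "(\<Sum>i<m. x $ i * v i k) \<noteq> 0"
    using indep by blast
  have "(\<Sum>k\<in>K. w2 k * u k) < (\<Sum>k\<in>K. w1 k * u k)"
  proof (rule sum_strict_mono_ex1[OF K])
    show "\<forall>k\<in>K. w2 k * u k \<le> w1 k * u k"
      using w by (auto simp: u_def intro!: mult_right_mono)
    show "\<exists>k\<in>K. w2 k * u k < w1 k * u k"
      using k w by (intro bexI[of _ k]) (auto simp: u_def)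
  qed
  moreover have "0 \<le> (\<Sum>k\<in>K. w2 k * u k)"
    using w by (auto simp: u_def intro!: sum_nonneg)
  ultimately show "0 \<le> Re (qform (weighted_gram m K w2 v) x) \<and>
      Re (qform (weighted_gram m K w2 v) x) < Re (qform (weighted_gram m K w1 v) x)"
    unfolding qform_weighted_gram[OF x(1)] u_def by simp
qed

lemma det_weighted_gram_compare:
  fixes v :: "nat \<Rightarrow> 'k \<Rightarrow> complex"
  assumes K: "finite K" and w: "\<forall>k\<in>K. 0 \<le> w2 k \<and> w2 k < w1 k" and m: "0 < m"
  defines "dep \<equiv> \<exists>a. (\<exists>i<m. a i \<noteq> 0) \<and> (\<forall>k\<in>K. (\<Sum>i<m. a i * v i k) = 0)"
  shows "det (weighted_gram m K w2 v) \<le> det (weighted_gram m K w1 v) \<and>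
         (det (weighted_gram m K w1 v) = det (weighted_gram m K w2 v) \<longleftrightarrow> dep) \<and>
         (dep \<longrightarrow> det (weighted_gram m K w1 v) = 0 \<and> det (weighted_gram m K w2 v) = 0)"
proof (cases dep)
  case True
  then obtain a where "\<exists>i<m. a i \<noteq> 0" "\<forall>k\<in>K. (\<Sum>i<m. a i * v i k) = 0"
    unfolding dep_def by blast
  then have "det (weighted_gram m K w1 v) = 0" "det (weighted_gram m K w2 v) = 0"
    by (blast intro: det_weighted_gram_dependent)+
  then show ?thesis using True by simp
next
  case False
  then have "det (weighted_gram m K w2 v) < det (weighted_gram m K w1 v)"
    using det_weighted_gram_less[OF K w m] unfolding dep_def by blast
  then show ?thesis
    using False by (simp add: less_imp_le less_imp_neq[symmetric])
qed

section \<open>Standard functions and their means\<close>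

lemma pos_def_diag_c_1: "0 < a \<Longrightarrow> pos_def 1 (diag_c 1 (\<lambda>_. a))"
  unfolding pos_def_def
proof (intro conjI ballI impI hermitian_diag_c)
  fix v :: "complex vec" assume a: "0 < a" and v: "v \<in> carrier_vec 1" "v \<noteq> 0\<^sub>v 1"
  have "v $ 0 \<noteq> 0"
  proof
    assume "v $ 0 = 0"
    then have "v = 0\<^sub>v 1" using v(1) by (intro eq_vecI) auto
    then show False using v(2) by simp
  qed
  then show "0 < Re (qform (diag_c 1 (\<lambda>_. a)) v)" using v(1) a by (simp add: qform_diag_c)
qed

lemma loewner_le_diag_c_1: "a \<le> b \<Longrightarrow> loewner_le 1 (diag_c 1 (\<lambda>_. a)) (diag_c 1 (\<lambda>_. b))"
proof -
  assume "a \<le> b"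
  have "diag_c 1 (\<lambda>_. b) - diag_c 1 (\<lambda>_. a) = diag_c 1 (\<lambda>_. b - a)"
    by (rule eq_matI) auto
  then show ?thesis
    using \<open>a \<le> b\<close> unfolding loewner_le_def pos_semidef_def
    by (simp add: hermitian_diag_c qform_diag_c)
qed

lemma mat_fun_diag_c_1: "mat_fun f (diag_c 1 (\<lambda>_. a)) = diag_c 1 (\<lambda>_. f a)"
proof -
  obtain U l where sd: "spec_decomp (diag_c 1 (\<lambda>_. a)) = (U,l)"
    by (cases "spec_decomp (diag_c 1 (\<lambda>_. a))") auto
  note U = spec_decompD[OF hermitian_diag_c sd]
  have Uc: "U \<in> carrier_mat 1 1" using U(1) by (rule unitary_carrier)
  have u: "U $$ (0,0) * cnj (U $$ (0,0)) = 1"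
    using arg_cong[OF unitary_mult_adj[OF U(1)], of "\<lambda>M. M $$ (0,0)"] Uc
    by (simp add: scalar_prod_lessThan)
  have entry: "(U * diag_c 1 h * adj U) $$ (0,0) = complex_of_real (h 0)" for h
    using index_mult_diag_c_adj[OF Uc, of 0 0 h] u by (simp add: mult_ac)
  have "a = l 0"
    using arg_cong[OF U(2), of "\<lambda>M. M $$ (0,0)"] entry[of l] by simp
  then show ?thesis
    unfolding mat_fun_def sd using entry[of "\<lambda>i. f (l i)"] Uc by (auto intro!: eq_matI)
qed

lemma operator_monotone_mono:
  assumes "operator_monotone f" "0 < a" "a \<le> b"
  shows "f a \<le> f b"
proof -
  have "loewner_le 1 (diag_c 1 (\<lambda>_. f a)) (diag_c 1 (\<lambda>_. f b))"
    using assms pos_def_diag_c_1[of a] pos_def_diag_c_1[of b] loewner_le_diag_c_1[of a b]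
    unfolding operator_monotone_def by (metis mat_fun_diag_c_1 order.strict_trans2)
  then have "pos_semidef 1 (diag_c 1 (\<lambda>_. f b) - diag_c 1 (\<lambda>_. f a))"
    unfolding loewner_le_def by blast
  also have "diag_c 1 (\<lambda>_. f b) - diag_c 1 (\<lambda>_. f a) = diag_c 1 (\<lambda>_. f b - f a)"
    by (rule eq_matI) auto
  finally have "0 \<le> Re (qform (diag_c 1 (\<lambda>_. f b - f a)) (vec 1 (\<lambda>_. 1)))"
    unfolding pos_semidef_def by auto
  then show ?thesis by (simp add: qform_diag_c)
qed

lemma standard_pos: "standard f \<Longrightarrow> 0 < t \<Longrightarrow> 0 < f t"
  unfolding standard_def by blast

lemma standard_mono: "standard f \<Longrightarrow> 0 < a \<Longrightarrow> a \<le> b \<Longrightarrow> f a \<le> f b"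
  using operator_monotone_mono unfolding standard_def by blast

lemma standard_symmetric: "standard f \<Longrightarrow> 0 < t \<Longrightarrow> f t = t * f (1 / t)"
  unfolding standard_def by blast

text \<open>Below 1 compare with \<open>x/2\<close>: \<open>g f\<close> is monotone while \<open>(x - 1)\<^sup>2\<close> strictly decreases on \<open>(0,1]\<close>.
  Above 1 use the symmetry \<open>f x = x f (1/x)\<close> to pass to \<open>1/x\<close>.\<close>

lemma standard_product_strict_bound:
  assumes f: "standard f" and g: "standard g" and c: "0 < c"
    and fg: "\<forall>x>0. g x \<ge> c * (x - 1)\<^sup>2 / f x"
    and x: "0 < x" "x \<noteq> 1"
  shows "c * (x - 1)\<^sup>2 < g x * f x"
proof -
  have bound: "c * (y - 1)\<^sup>2 \<le> g y * f y" if "0 < y" for y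
  proof -
    have "c * (y - 1)\<^sup>2 / f y \<le> g y" using fg that by blast
    then show ?thesis using standard_pos[OF f that] by (simp add: pos_divide_le_eq)
  qed
  have below: "c * (y - 1)\<^sup>2 < g y * f y" if y: "0 < y" "y < 1" for y
  proof -
    have "(1 - y)\<^sup>2 < (1 - y / 2)\<^sup>2"
      using y by (intro power_strict_mono) auto
    then have "c * (y - 1)\<^sup>2 < c * (y / 2 - 1)\<^sup>2"
      using c by (simp add: power2_commute)
    also have "\<dots> \<le> g (y / 2) * f (y / 2)"
      using y by (intro bound) auto
    also have "\<dots> \<le> g y * f y"
      using y standard_pos[OF f] standard_pos[OF g]
      by (intro mult_mono standard_mono[OF g] standard_mono[OF f]) (auto intro: less_imp_le)
    finally show ?thesis .
  qed
  show ?thesis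
  proof (cases "x < 1")
    case False
    then have x1: "1 < x" using x by auto
    have "x\<^sup>2 * (c * (1 / x - 1)\<^sup>2) < x\<^sup>2 * (g (1 / x) * f (1 / x))"
      using x1 below[of "1 / x"] by (intro mult_strict_left_mono) auto
    moreover have "x\<^sup>2 * (c * (1 / x - 1)\<^sup>2) = c * (x - 1)\<^sup>2"
      using x1 by (simp add: power2_eq_square field_simps)
    moreover have "x\<^sup>2 * (g (1 / x) * f (1 / x)) = g x * f x"
      using standard_symmetric[OF f x(1)] standard_symmetric[OF g x(1)] by (simp add: power2_eq_square)
    ultimately show ?thesis by simp
  qed (use below x in auto)
qed

lemma mean_pos: "standard f \<Longrightarrow> 0 < a \<Longrightarrow> 0 < b \<Longrightarrow> 0 < mean f a b"
  by (simp add: mean_def standard_pos)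

lemma mean_self:
  assumes "standard f"
  shows "mean f a a = a"
proof -
  have "f 1 = 1" using assms unfolding standard_def by blast
  then show ?thesis by (cases "a = 0") (simp_all add: mean_def)
qed

lemma mean_strict_bound:
  assumes f: "standard f" and g: "standard g" and c: "0 < c"
    and fg: "\<forall>x>0. g x \<ge> c * (x - 1)\<^sup>2 / f x"
    and ab: "0 < a" "0 < b" "a \<noteq> b"
  shows "c * (a - b)\<^sup>2 / mean f a b < mean g a b"
proof -
  have fpos: "0 < f (a / b)" using standard_pos[OF f] ab by simp
  have "c * (a / b - 1)\<^sup>2 < g (a / b) * f (a / b)"
    using standard_product_strict_bound[OF f g c fg, of "a / b"] ab by auto
  then have "b * (c * (a / b - 1)\<^sup>2 / f (a / b)) < b * g (a / b)"
    using ab fpos by (simp add: pos_divide_less_eq)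
  moreover have "b * (c * (a / b - 1)\<^sup>2 / f (a / b)) = c * (a - b)\<^sup>2 / (b * f (a / b))"
    using ab fpos by (simp add: field_simps power2_eq_square)
  ultimately show ?thesis unfolding mean_def by simp
qed

section \<open>Covariance and Fisher information in an eigenbasis of the density\<close>

lemma mtrace_mult_conj:
  assumes U: "U \<in> carrier_mat n n" and Y: "Y \<in> carrier_mat n n" and M: "M \<in> carrier_mat n n"
  shows "mtrace (Y * (U * M * adj U)) = (\<Sum>r<n. \<Sum>s<n. (adj U * Y * U) $$ (r,s) * M $$ (s,r))"
proof -
  have "mtrace (Y * (U * M * adj U)) = mtrace (adj U * (Y * U * M))"
    using mtrace_mult_comm[of "Y * U * M" n n "adj U"] U Y M
    by (simp add: assoc_mult_mat[of _ n n _ n _ n] mult_carrier_mat[of _ n n _ n])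
  also have "adj U * (Y * U * M) = (adj U * Y * U) * M"
    using U Y M by (simp add: assoc_mult_mat[of _ n n _ n _ n] mult_carrier_mat[of _ n n _ n])
  finally show ?thesis
    unfolding mtrace_def using U Y M by (simp add: scalar_prod_lessThan)
qed

lemma index_conj_shift:
  assumes U: "unitary n U" and Y: "Y \<in> carrier_mat n n" and rs: "r < n" "s < n"
  shows "(adj U * (Y - t \<cdot>\<^sub>m 1\<^sub>m n) * U) $$ (r,s) = (adj U * Y * U) $$ (r,s) - (if r = s then t else 0)"
proof -
  have Uc: "U \<in> carrier_mat n n" using U by (rule unitary_carrier)
  have orth: "(\<Sum>p<n. cnj (U $$ (p,r)) * U $$ (p,s)) = (if r = s then 1 else 0)"
    using arg_cong[OF unitary_adj_mult[OF U], of "\<lambda>M. M $$ (r,s)"] rs Uc by (simp add: scalar_prod_lessThan)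
  have "(\<Sum>q<n. (Y - t \<cdot>\<^sub>m 1\<^sub>m n) $$ (p,q) * U $$ (q,s)) = (\<Sum>q<n. Y $$ (p,q) * U $$ (q,s)) - t * U $$ (p,s)"
    if "p < n" for p
    using that Y
    by (simp add: algebra_simps sum_subtractf if_distrib[of "\<lambda>x. x * _"] if_distrib[of "\<lambda>x. _ * x"]
        cong: if_cong)
  then have "(adj U * (Y - t \<cdot>\<^sub>m 1\<^sub>m n) * U) $$ (r,s) =
      (\<Sum>p<n. cnj (U $$ (p,r)) * (\<Sum>q<n. Y $$ (p,q) * U $$ (q,s))) - t * (\<Sum>p<n. cnj (U $$ (p,r)) * U $$ (p,s))"
    using index_conj_mat[OF Uc _ rs, of "Y - t \<cdot>\<^sub>m 1\<^sub>m n"] Y minus_carrier_mat[of "t \<cdot>\<^sub>m 1\<^sub>m n" n n Y]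
    by (simp add: right_diff_distrib sum_subtractf sum_distrib_left mult_ac)
  then show ?thesis
    unfolding orth using index_conj_mat[OF Uc Y rs] by simp
qed

lemma lincomb_conj_zero:
  assumes V: "V \<in> carrier_mat n n" and Z: "\<forall>i<m. Z i \<in> carrier_mat n n"
    and a: "\<forall>r<n. \<forall>s<n. (\<Sum>i<m. a i * Z i $$ (r,s)) = 0"
  shows "\<forall>p<n. \<forall>q<n. (\<Sum>i<m. a i * (adj V * Z i * V) $$ (p,q)) = 0"
proof (intro allI impI)
  fix p q assume pq: "p < n" "q < n"
  have "(\<Sum>i<m. a i * (adj V * Z i * V) $$ (p,q)) =
        (\<Sum>i<m. \<Sum>r<n. \<Sum>s<n. cnj (V $$ (r,p)) * (a i * Z i $$ (r,s)) * V $$ (s,q))"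
    using V Z pq
    by (simp add: index_conj_mat sum_distrib_left sum_distrib_right mult_ac del: index_mult_mat(1))
  also have "\<dots> = (\<Sum>r<n. \<Sum>s<n. cnj (V $$ (r,p)) * (\<Sum>i<m. a i * Z i $$ (r,s)) * V $$ (s,q))"
    by (subst sum.swap, rule sum.cong[OF refl], subst sum.swap)
      (simp add: sum_distrib_left sum_distrib_right)
  finally show "(\<Sum>i<m. a i * (adj V * Z i * V) $$ (p,q)) = 0" using a by simp
qed

lemma lincomb_conj_zero_iff:
  assumes U: "unitary n U" and Z: "\<forall>i<m. Z i \<in> carrier_mat n n"
  shows "(\<forall>r<n. \<forall>s<n. (\<Sum>i<m. a i * Z i $$ (r,s)) = 0) \<longleftrightarrow>
         (\<forall>r<n. \<forall>s<n. (\<Sum>i<m. a i * (adj U * Z i * U) $$ (r,s)) = 0)"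
proof
  have Uc: "U \<in> carrier_mat n n" using U by (rule unitary_carrier)
  show "\<forall>r<n. \<forall>s<n. (\<Sum>i<m. a i * (adj U * Z i * U) $$ (r,s)) = 0"
    if "\<forall>r<n. \<forall>s<n. (\<Sum>i<m. a i * Z i $$ (r,s)) = 0"
    by (rule lincomb_conj_zero[OF Uc Z that])
  assume "\<forall>r<n. \<forall>s<n. (\<Sum>i<m. a i * (adj U * Z i * U) $$ (r,s)) = 0"
  moreover have "\<forall>i<m. adj U * Z i * U \<in> carrier_mat n n"
    using Z Uc by (simp add: mult_carrier_mat[of _ n n _ n])
  ultimately have "\<forall>r<n. \<forall>s<n. (\<Sum>i<m. a i * (U * (adj U * Z i * U) * adj U) $$ (r,s)) = 0"
    using lincomb_conj_zero[OF adj_carrier_mat[OF Uc]] by simp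
  then
  show "\<forall>r<n. \<forall>s<n. (\<Sum>i<m. a i * Z i $$ (r,s)) = 0"
    using Z Uc unitary_conj_cancel(2)[OF U] by simp
qed

lemma sum_centered_products:
  fixes w x y :: "nat \<times> nat \<Rightarrow> complex"
  shows "(\<Sum>k\<in>{..<n}\<times>{..<n}. w k * cnj (x k - (if fst k = snd k then a else 0)) *
            (y k - (if fst k = snd k then b else 0)))
    = (\<Sum>k\<in>{..<n}\<times>{..<n}. w k * cnj (x k) * y k) - cnj a * (\<Sum>p<n. w (p,p) * y (p,p))
      - b * (\<Sum>p<n. w (p,p) * cnj (x (p,p))) + cnj a * b * (\<Sum>p<n. w (p,p))"
proof -
  have "(\<Sum>q<n. w (p,q) * cnj (x (p,q) - (if p = q then a else 0)) * (y (p,q) - (if p = q then b else 0)))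
      = (\<Sum>q<n. w (p,q) * cnj (x (p,q)) * y (p,q)) - cnj a * (w (p,p) * y (p,p))
        - b * (w (p,p) * cnj (x (p,p))) + cnj a * b * w (p,p)" if "p < n" for p
  proof -
    have "(\<Sum>q<n. w (p,q) * cnj (x (p,q) - (if p = q then a else 0)) * (y (p,q) - (if p = q then b else 0)))
      = (\<Sum>q<n. w (p,q) * cnj (x (p,q)) * y (p,q) - (if p = q then cnj a * (w (p,p) * y (p,p))
          + b * (w (p,p) * cnj (x (p,p))) - cnj a * b * w (p,p) else 0))"
      by (rule sum.cong) (auto simp: algebra_simps)
    then show ?thesis using that by (simp add: sum_subtractf)
  qed
  then show ?thesis
    by (simp add: sum.cartesian_product' sum_subtractf sum.distrib sum_distrib_left)
qed

lemma mat_eq_weighted_gramI: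
  assumes "\<And>i j. i < m \<Longrightarrow> j < m \<Longrightarrow> weighted_gram m K w v $$ (i,j) = F (i,j)"
  shows "mat m m F = weighted_gram m K w v"
  using assms by (intro eq_matI) (auto simp: weighted_gram_def)

definition centered_coord :: "nat \<Rightarrow> complex mat \<Rightarrow> complex mat \<Rightarrow> complex mat \<Rightarrow> nat \<times> nat \<Rightarrow> complex" where
  "centered_coord n D U A k = (adj U * (A - mtrace (D * A) \<cdot>\<^sub>m 1\<^sub>m n) * U) $$ k"

context
  fixes n :: nat and D U :: "complex mat" and l :: "nat \<Rightarrow> real"
  assumes density: "density n D" and decomp: "spec_decomp D = (U,l)"
begin

lemma eigen_unitary: "unitary n U"
  and eigen_decomp: "D = U * diag_c n l * adj U"
  using spec_decompD[OF _ decomp] density by (auto simp: density_def pos_def_def)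

lemma eigen_carrier: "U \<in> carrier_mat n n" "D \<in> carrier_mat n n"
  using unitary_carrier[OF eigen_unitary] eigen_decomp by auto

lemma eigenvalue_pos: "r < n \<Longrightarrow> 0 < l r"
  using positive_qform_eigenvalue_pos[OF eigen_unitary] density eigen_decomp
  unfolding density_def pos_def_def by metis

lemma mtrace_density_mult:
  assumes Y: "Y \<in> carrier_mat n n"
  shows "mtrace (D * Y) = (\<Sum>r<n. complex_of_real (l r) * (adj U * Y * U) $$ (r,r))"
proof -
  have "mtrace (D * Y) = mtrace (Y * D)"
    using Y eigen_carrier by (intro mtrace_mult_comm) auto
  also have "\<dots> = (\<Sum>r<n. \<Sum>s<n. (adj U * Y * U) $$ (r,s) * diag_c n l $$ (s,r))"
    unfolding eigen_decomp using eigen_carrier Y by (intro mtrace_mult_conj) auto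
  also have "\<dots> = (\<Sum>r<n. complex_of_real (l r) * (adj U * Y * U) $$ (r,r))"
    by (simp add: if_distrib[of "\<lambda>x. _ * x"] cong: if_cong) (simp add: mult.commute)
  finally show ?thesis .
qed

lemma eigenvalue_sum: "(\<Sum>r<n. complex_of_real (l r)) = 1"
  using mtrace_density_mult[of "1\<^sub>m n"] density eigen_carrier unitary_adj_mult[OF eigen_unitary]
  by (simp add: density_def)

lemma mtrace_adj_schur_op:
  assumes X: "X \<in> carrier_mat n n" and Y: "Y \<in> carrier_mat n n"
  shows "mtrace (adj X * schur_op k D Y) = (\<Sum>r<n. \<Sum>s<n. complex_of_real (k (l r) (l s)) *
           cnj ((adj U * X * U) $$ (r,s)) * (adj U * Y * U) $$ (r,s))"
proof -
  define M where "M = mat n n (\<lambda>(r,s). complex_of_real (k (l r) (l s)) * (adj U * Y * U) $$ (r,s))"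
  have "schur_op k D Y = U * M * adj U"
    using decomp eigen_carrier unfolding schur_op_def M_def by simp
  then have "mtrace (adj X * schur_op k D Y) = (\<Sum>r<n. \<Sum>s<n. (adj U * adj X * U) $$ (r,s) * M $$ (s,r))"
    using eigen_carrier X by (simp add: mtrace_mult_conj M_def)
  also have "\<dots> = (\<Sum>r<n. \<Sum>s<n. complex_of_real (k (l s) (l r)) *
           cnj ((adj U * X * U) $$ (s,r)) * (adj U * Y * U) $$ (s,r))"
    using eigen_carrier X by (intro sum.cong refl) (simp add: adj_conj_mat[symmetric] M_def mult_ac)
  finally show ?thesis by (subst (asm) sum.swap)
qed

lemma index_conj_commutator:
  assumes Y: "Y \<in> carrier_mat n n" and rs: "r < n" "s < n"
  shows "(adj U * commutator D Y * U) $$ (r,s) = complex_of_real (l r - l s) * (adj U * Y * U) $$ (r,s)"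
proof -
  note c = eigen_carrier(1) Y
  have cDY: "adj U \<in> carrier_mat n n" "D * Y \<in> carrier_mat n n" "Y * D \<in> carrier_mat n n"
    using c eigen_carrier(2) by (simp_all add: mult_carrier_mat[of _ n n _ n])
  have "adj U * commutator D Y * U = (adj U * (D * Y) - adj U * (Y * D)) * U"
    unfolding commutator_def by (simp add: mult_minus_distrib_mat[OF cDY])
  also have "\<dots> = adj U * (D * Y) * U - adj U * (Y * D) * U"
    using cDY c by (intro minus_mult_distrib_mat[of _ n n]) (auto simp: mult_carrier_mat[of _ n n _ n])
  also have "\<dots> = diag_c n l * (adj U * Y * U) - (adj U * Y * U) * diag_c n l"
    using c unfolding eigen_decomp
    by (simp add: assoc_mult_mat[of _ n n _ n _ n] mult_carrier_mat[of _ n n _ n] unitary_adj_mult_cancel[OF eigen_unitary]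
        unitary_adj_mult[OF eigen_unitary])
  finally show ?thesis
    using c rs
    by (simp add: index_diag_c_mult mult_carrier_mat[of _ n n _ n] algebra_simps del: index_mult_mat(1))
qed

lemma centered_coord_eq:
  assumes "Y \<in> carrier_mat n n" "r < n" "s < n"
  shows "centered_coord n D U Y (r,s) = (adj U * Y * U) $$ (r,s) - (if r = s then mtrace (D * Y) else 0)"
  using index_conj_shift[OF eigen_unitary assms] unfolding centered_coord_def .

lemma mtrace_density_mult_adj:
  assumes "Y \<in> carrier_mat n n"
  shows "mtrace (D * adj Y) = cnj (mtrace (D * Y))"
  using assms eigen_carrier
  by (simp add: mtrace_density_mult adj_conj_mat[symmetric] cnj_sum)

lemma weighted_gram_centered_coord:
  assumes A: "\<forall>i<m. A i \<in> carrier_mat n n" and ij: "i < m" "j < m"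
  shows "weighted_gram m ({..<n} \<times> {..<n}) w (\<lambda>i. centered_coord n D U (A i)) $$ (i,j) =
    (\<Sum>r<n. \<Sum>s<n. complex_of_real (w (r,s)) * cnj ((adj U * A i * U) $$ (r,s)) * (adj U * A j * U) $$ (r,s))
    - cnj (mtrace (D * A i)) * (\<Sum>p<n. complex_of_real (w (p,p)) * (adj U * A j * U) $$ (p,p))
    - mtrace (D * A j) * (\<Sum>p<n. complex_of_real (w (p,p)) * cnj ((adj U * A i * U) $$ (p,p)))
    + cnj (mtrace (D * A i)) * mtrace (D * A j) * (\<Sum>p<n. complex_of_real (w (p,p)))"
proof -
  have "weighted_gram m ({..<n} \<times> {..<n}) w (\<lambda>i. centered_coord n D U (A i)) $$ (i,j) =
      (\<Sum>k\<in>{..<n} \<times> {..<n}. complex_of_real (w k) *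
        cnj ((adj U * A i * U) $$ k - (if fst k = snd k then mtrace (D * A i) else 0)) *
        ((adj U * A j * U) $$ k - (if fst k = snd k then mtrace (D * A j) else 0)))"
    using ij A unfolding weighted_gram_def
    by (auto simp: centered_coord_eq simp del: index_mult_mat intro!: sum.cong)
  then show ?thesis
    by (simp only: sum_centered_products) (simp add: sum.cartesian_product')
qed

lemma qCov_weighted_gram:
  assumes g: "standard g" and A: "\<forall>i<m. A i \<in> carrier_mat n n"
  shows "mat m m (\<lambda>(i,j). qCov g D (A i) (A j)) =
    weighted_gram m ({..<n} \<times> {..<n}) (\<lambda>(r,s). mean g (l r) (l s)) (\<lambda>i. centered_coord n D U (A i))"
proof (rule mat_eq_weighted_gramI, unfold prod.case, goal_cases)
  case (1 i j)
  have diag: "(\<lambda>(r,s). mean g (l r) (l s)) (p,p) = l p" for p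
    by (simp add: mean_self[OF g])
  have t: "(\<Sum>p<n. complex_of_real (l p) * (adj U * A j * U) $$ (p,p)) = mtrace (D * A j)"
    and ct: "(\<Sum>p<n. complex_of_real (l p) * cnj ((adj U * A i * U) $$ (p,p))) = cnj (mtrace (D * A i))"
    using 1 A by (simp_all add: mtrace_density_mult cnj_sum)
  have "weighted_gram m ({..<n} \<times> {..<n}) (\<lambda>(r,s). mean g (l r) (l s))
      (\<lambda>i. centered_coord n D U (A i)) $$ (i,j) =
    (\<Sum>r<n. \<Sum>s<n. complex_of_real (mean g (l r) (l s)) * cnj ((adj U * A i * U) $$ (r,s)) *
      (adj U * A j * U) $$ (r,s)) - cnj (mtrace (D * A i)) * mtrace (D * A j)"
    unfolding weighted_gram_centered_coord[OF A 1] diag t ct eigenvalue_sum by simp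
  also have "\<dots> = qCov g D (A i) (A j)"
    using 1 A by (simp add: qCov_def J_op_def mtrace_adj_schur_op mtrace_density_mult_adj)
  finally show ?case .
qed

lemma qFisher_weighted_gram:
  assumes A: "\<forall>i<m. A i \<in> carrier_mat n n"
  shows "mat m m (\<lambda>(i,j). complex_of_real c * qFisher f D (commutator D (A i)) (commutator D (A j))) =
    weighted_gram m ({..<n} \<times> {..<n}) (\<lambda>(r,s). c * (l r - l s)\<^sup>2 / mean f (l r) (l s))
      (\<lambda>i. centered_coord n D U (A i))"
proof (rule mat_eq_weighted_gramI, unfold prod.case, goal_cases)
  case (1 i j)
  have comm: "commutator D (A k) \<in> carrier_mat n n" if "k < m" for k
    unfolding commutator_def using A that eigen_carrier
    by (intro minus_carrier_mat) (simp add: mult_carrier_mat[of _ n n _ n])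
  have "weighted_gram m ({..<n} \<times> {..<n}) (\<lambda>(r,s). c * (l r - l s)\<^sup>2 / mean f (l r) (l s))
      (\<lambda>i. centered_coord n D U (A i)) $$ (i,j) =
    complex_of_real c * (\<Sum>r<n. \<Sum>s<n. complex_of_real (1 / mean f (l r) (l s)) *
        cnj (complex_of_real (l r - l s) * (adj U * A i * U) $$ (r,s)) *
        (complex_of_real (l r - l s) * (adj U * A j * U) $$ (r,s)))"
    unfolding weighted_gram_centered_coord[OF A 1]
    by (simp add: sum_distrib_left) (intro sum.cong refl, simp add: power2_eq_square mult_ac)
  also have "\<dots> = complex_of_real c * qFisher f D (commutator D (A i)) (commutator D (A j))"
    unfolding qFisher_def J_inv_def using 1 A comm
    by (simp add: mtrace_adj_schur_op index_conj_commutator)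
  finally show ?case .
qed

lemma eigen_weights_strict:
  assumes f: "standard f" and g: "standard g" and c: "0 < c"
    and fg: "\<forall>x>0. g x \<ge> c * (x - 1)\<^sup>2 / f x"
  shows "\<forall>k\<in>{..<n} \<times> {..<n}. 0 \<le> (\<lambda>(r,s). c * (l r - l s)\<^sup>2 / mean f (l r) (l s)) k \<and>
           (\<lambda>(r,s). c * (l r - l s)\<^sup>2 / mean f (l r) (l s)) k < (\<lambda>(r,s). mean g (l r) (l s)) k"
proof (clarify)
  fix r s assume "r < n" "s < n"
  then have l: "0 < l r" "0 < l s" using eigenvalue_pos by auto
  have "0 \<le> c * (l r - l s)\<^sup>2 / mean f (l r) (l s)"
    using c mean_pos[OF f l] by simp
  moreover have "c * (l r - l s)\<^sup>2 / mean f (l r) (l s) < mean g (l r) (l s)"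
  proof (cases "l r = l s")
    case True
    then show ?thesis using mean_pos[OF g l] by simp
  qed (rule mean_strict_bound[OF f g c fg l])
  ultimately show "0 \<le> c * (l r - l s)\<^sup>2 / mean f (l r) (l s) \<and>
      c * (l r - l s)\<^sup>2 / mean f (l r) (l s) < mean g (l r) (l s)" ..
qed

lemma centered_dependent_iff:
  assumes A: "\<forall>i<m. A i \<in> carrier_mat n n"
  shows "(\<exists>a. (\<exists>i<m. a i \<noteq> 0) \<and>
            (\<forall>r<n. \<forall>s<n. (\<Sum>i<m. a i * (A i - mtrace (D * A i) \<cdot>\<^sub>m 1\<^sub>m n) $$ (r,s)) = 0)) \<longleftrightarrow>
         (\<exists>a. (\<exists>i<m. a i \<noteq> 0) \<and>
            (\<forall>k\<in>{..<n} \<times> {..<n}. (\<Sum>i<m. a i * centered_coord n D U (A i) k) = 0))"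
proof -
  have Z: "\<forall>i<m. A i - mtrace (D * A i) \<cdot>\<^sub>m 1\<^sub>m n \<in> carrier_mat n n"
    using A by (auto intro: minus_carrier_mat)
  have "(\<forall>r<n. \<forall>s<n. (\<Sum>i<m. a i * (A i - mtrace (D * A i) \<cdot>\<^sub>m 1\<^sub>m n) $$ (r,s)) = 0) \<longleftrightarrow>
      (\<forall>k\<in>{..<n} \<times> {..<n}. (\<Sum>i<m. a i * centered_coord n D U (A i) k) = 0)" for a
    using lincomb_conj_zero_iff[OF eigen_unitary Z, of a]
    by (simp add: centered_coord_def del: index_mult_mat) blast
  then show ?thesis by blast
qed

end

theorem theorem3:
  fixes n m :: nat and D :: "complex mat" and f g :: "real \<Rightarrow> real" and c :: real
    and A :: "nat \<Rightarrow> complex mat"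
  assumes D: "density n D"
    and f: "standard f" and g: "standard g"
    and c: "c > 0" and fg: "\<forall>x>0. g x \<ge> c * (x - 1)^2 / f x"
    and m: "m \<ge> 1"
    and A: "\<forall>i<m. hermitian n (A i)"
  shows "det (mat m m (\<lambda>(i,j). complex_of_real c *
              qFisher f D (commutator D (A i)) (commutator D (A j))))
         \<le> det (mat m m (\<lambda>(i,j). qCov g D (A i) (A j)))
    \<and> (det (mat m m (\<lambda>(i,j). qCov g D (A i) (A j))) =
         det (mat m m (\<lambda>(i,j). complex_of_real c *
              qFisher f D (commutator D (A i)) (commutator D (A j))))
       \<longleftrightarrow> (\<exists>a :: nat \<Rightarrow> complex. (\<exists>i<m. a i \<noteq> 0) \<and>
               (\<forall>r<n. \<forall>s<n. (\<Sum>i<m. a i *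
                   (A i - mtrace (D * A i) \<cdot>\<^sub>m 1\<^sub>m n) $$ (r,s)) = 0)))
    \<and> ((\<exists>a :: nat \<Rightarrow> complex. (\<exists>i<m. a i \<noteq> 0) \<and>
               (\<forall>r<n. \<forall>s<n. (\<Sum>i<m. a i *
                   (A i - mtrace (D * A i) \<cdot>\<^sub>m 1\<^sub>m n) $$ (r,s)) = 0))
         \<longrightarrow> det (mat m m (\<lambda>(i,j). qCov g D (A i) (A j))) = 0 \<and>
             det (mat m m (\<lambda>(i,j). complex_of_real c *
              qFisher f D (commutator D (A i)) (commutator D (A j)))) = 0)"
proof -
  obtain U l where decomp: "spec_decomp D = (U,l)" by (cases "spec_decomp D") auto
  have A: "\<forall>i<m. A i \<in> carrier_mat n n" using A by (simp add: hermitian_carrier)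
  have "0 < m" using m by simp
  from det_weighted_gram_compare[OF _ eigen_weights_strict[OF D decomp f g c fg] this]
  show ?thesis
    unfolding qCov_weighted_gram[OF D decomp g A] qFisher_weighted_gram[OF D decomp A]
      centered_dependent_iff[OF D decomp A]
    by simp
qed

end
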